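(* Let $(X,T)$ be a dynamical system with metric $d$, $(Y,S)$ a dynamical system with metric $d'$, and $\pi:(X,T)\to(Y,S)$ an equivariant continuous map. Then $\overline{\mathrm{mdim}}_{\mathrm{M}}(\pi,T,d)=\limsup_{\varepsilon\to0}\left\{\lim_{\delta\to0}\lim_{N\to\infty}\frac{\sup_{y\in Y}\log\#\left(\pi^{-1}(B_\delta(y,d'_N)),d_N,\varepsilon\right)}{N\log(1/\varepsilon)}\right\}$ and $\underline{\mathrm{mdim}}_{\mathrm{M}}(\pi,T,d)=\liminf_{\varepsilon\to0}\left\{\lim_{\delta\to0}\lim_{N\to\infty}\frac{\sup_{y\in Y}\log\#\left(\pi^{-1}(B_\delta(y,d'_N)),d_N,\varepsilon\right)}{N\log(1/\varepsilon)}\right\}$.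
   Context: A dynamical system is a compact metrizable space with a homeomorphism; $\pi$ equivariant means $\pi\circ T=S\circ\pi$. For $N\ge1$, $d_N(x,y)=\max_{0\le n<N}d(T^nx,T^ny)$ and $d'_N$ similarly for $S$. $B_r(y,d'_N)=\{z\in Y: d'_N(z,y)\le r\}$. For $E\subset X$, $\#(E,d_N,\varepsilon)$ is the minimal number of open sets of $d_N$-diameter $<\varepsilon$ covering $E$ ($0$ if empty). The upper and lower conditional metric mean dimensions are $\overline{\mathrm{mdim}}_{\mathrm{M}}(\pi,T,d)=\limsup_{\varepsilon\to0}\lim_{N\to\infty}\frac{\sup_{y\in Y}\log\#(\pi^{-1}(y),d_N,\varepsilon)}{N\log(1/\varepsilon)}$ and $\underline{\mathrm{mdim}}_{\mathrm{M}}(\pi,T,d)$ the same with $\liminf_{\varepsilon\to0}$. *)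

theory Defs
  imports "HOL-Analysis.Analysis"
begin

definition dyn_sys :: "('a::metric_space \<Rightarrow> 'a) \<Rightarrow> bool" where
  "dyn_sys T \<longleftrightarrow> compact (UNIV :: 'a set) \<and> (\<exists>T'. homeomorphism UNIV UNIV T T')"

definition bowen_dist :: "('a::metric_space \<Rightarrow> 'a) \<Rightarrow> nat \<Rightarrow> 'a \<Rightarrow> 'a \<Rightarrow> real" where
  "bowen_dist T N x y = Max ((\<lambda>n. dist ((T ^^ n) x) ((T ^^ n) y)) ` {..<N})"

definition bowen_diam :: "('a::metric_space \<Rightarrow> 'a) \<Rightarrow> nat \<Rightarrow> 'a set \<Rightarrow> real" where
  "bowen_diam T N U = (if U = {} then 0 else SUP p\<in>U \<times> U. bowen_dist T N (fst p) (snd p))"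

text \<open>#(E, d_N, eps): minimal number of open sets of d_N-diameter < eps covering E
  (0 if E is empty).\<close>
definition cover_num :: "('a::metric_space \<Rightarrow> 'a) \<Rightarrow> nat \<Rightarrow> real \<Rightarrow> 'a set \<Rightarrow> nat" where
  "cover_num T N \<epsilon> E = (LEAST k. \<exists>F. finite F \<and> card F = k \<and>
      (\<forall>U\<in>F. open U \<and> bowen_diam T N U < \<epsilon>) \<and> E \<subseteq> \<Union>F)"

definition bowen_ball :: "('b::metric_space \<Rightarrow> 'b) \<Rightarrow> nat \<Rightarrow> 'b \<Rightarrow> real \<Rightarrow> 'b set" where
  "bowen_ball S N y r = {z. bowen_dist S N z y \<le> r}"

definition fiber_rate :: "('a::metric_space \<Rightarrow> 'a) \<Rightarrow> ('a \<Rightarrow> 'b) \<Rightarrow> real \<Rightarrow> real" where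
  "fiber_rate T \<pi> \<epsilon> = lim (\<lambda>N. (SUP y. ln (real (cover_num T N \<epsilon> (\<pi> -` {y}))))
                                  / (real N * ln (1 / \<epsilon>)))"

definition upper_cond_mdim :: "('a::metric_space \<Rightarrow> 'a) \<Rightarrow> ('a \<Rightarrow> 'b) \<Rightarrow> ereal" where
  "upper_cond_mdim T \<pi> = Limsup (at_right 0) (\<lambda>\<epsilon>. ereal (fiber_rate T \<pi> \<epsilon>))"

definition lower_cond_mdim :: "('a::metric_space \<Rightarrow> 'a) \<Rightarrow> ('a \<Rightarrow> 'b) \<Rightarrow> ereal" where
  "lower_cond_mdim T \<pi> = Liminf (at_right 0) (\<lambda>\<epsilon>. ereal (fiber_rate T \<pi> \<epsilon>))"

definition ball_rate :: "('a::metric_space \<Rightarrow> 'a) \<Rightarrow> ('b::metric_space \<Rightarrow> 'b) \<Rightarrow> ('a \<Rightarrow> 'b)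
    \<Rightarrow> real \<Rightarrow> real" where
  "ball_rate T S \<pi> \<epsilon> = Lim (at_right 0) (\<lambda>\<delta>.
      lim (\<lambda>N. (SUP y. ln (real (cover_num T N \<epsilon> (\<pi> -` bowen_ball S N y \<delta>))))
                / (real N * ln (1 / \<epsilon>))))"

end

theory Submission
  imports Defs
begin

(* Fix \<epsilon> > 0.  For each \<delta> \<ge> 0 the sequence N \<mapsto> sup_y log #(\<pi>^{-1}(B_\<delta>(y,d'_N)), d_N, \<epsilon>)
   is subadditive: refining an optimal cover for the first N steps by the T^N-preimage of
   one for the next M steps covers the (N+M)-set, and equivariance carries the Bowen ball
   of S along.  By Fekete's lemma its growth rate is the infimum over N, and \<delta> = 0 gives
   the fibers.  Increasing \<delta> can only increase this infimum.  Conversely, for fixed N the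
   union of an optimal open cover of a fiber \<pi>^{-1}(y) contains \<pi>^{-1}(V) for an open
   V \<ni> y, so a Lebesgue number of these V shows that for small \<delta> every set
   \<pi>^{-1}(B_\<delta>(y',d'_N)) is covered by the optimal cover of a single fiber.  Hence the
   \<delta>-limit equals the fiber rate for every \<epsilon>, and so do the limsup and liminf. *)

lemma continuous_on_funpow:
  fixes T :: "'a::topological_space \<Rightarrow> 'a"
  assumes "continuous_on UNIV T"
  shows "continuous_on UNIV (T ^^ n)"
proof (induction n)
  case (Suc n)
  then show ?case
    using continuous_on_compose[of UNIV "T ^^ n" T] assms by (simp add: continuous_on_subset)
qed (simp add: continuous_on_id')

lemma funpow_equivariant:
  assumes "\<pi> \<circ> T = S \<circ> \<pi>"
  shows "\<pi> ((T ^^ n) x) = (S ^^ n) (\<pi> x)"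
proof (induction n)
  case (Suc n)
  have "\<pi> (T ((T ^^ n) x)) = S (\<pi> ((T ^^ n) x))" using assms by (metis comp_apply)
  with Suc show ?case by simp
qed simp

lemma uniform_fiber_neighborhoods:
  fixes \<pi> :: "'a::metric_space \<Rightarrow> 'b::metric_space"
  assumes "compact (UNIV :: 'a set)" "compact (UNIV :: 'b set)" "continuous_on UNIV \<pi>"
    and open_W: "\<And>y. open (W y)" and fiber_W: "\<And>y. \<pi> -` {y} \<subseteq> W y"
  obtains d where "d > 0" "\<And>B. diameter B < d \<Longrightarrow> \<exists>y. \<pi> -` B \<subseteq> W y"
proof -
  (* \<pi> is a closed map, so V y is an open neighborhood of y with \<pi>^{-1}(V y) \<subseteq> W y *)
  define V where "V y = - \<pi> ` (- W y)" for y
  have open_V: "open (V y)" for y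
  proof -
    have "compact (UNIV \<inter> - W y)" using assms(1) open_W[of y] by (intro compact_Int_closed) auto
    then have "compact (\<pi> ` (- W y))" using assms(3) by (intro compact_continuous_image) (auto intro: continuous_on_subset)
    then show ?thesis unfolding V_def by (simp add: compact_imp_closed open_Compl)
  qed
  have center_V: "y \<in> V y" for y using fiber_W[of y] unfolding V_def by auto
  obtain d where d: "0 < d" "\<And>B. B \<subseteq> UNIV \<Longrightarrow> diameter B < d \<Longrightarrow> \<exists>C \<in> range V. B \<subseteq> C"
    using Lebesgue_number_lemma[OF assms(2), of "range V"] open_V center_V by blast
  have "\<exists>y. \<pi> -` B \<subseteq> W y" if small: "diameter B < d" for B
  proof -
    obtain y where "B \<subseteq> V y" using d(2)[OF _ small] by blast
    then have "\<pi> -` B \<subseteq> W y" unfolding V_def by auto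
    then show ?thesis ..
  qed
  with d(1) show ?thesis by (rule that)
qed

section \<open>The Bowen metric\<close>

(* For N = 0 the maximum defining bowen_dist ranges over the empty set (a junk value),
   hence the hypotheses N \<ge> 1 throughout. *)

lemma dist_funpow_le_bowen_dist: "n < N \<Longrightarrow> dist ((T ^^ n) x) ((T ^^ n) y) \<le> bowen_dist T N x y"
  unfolding bowen_dist_def by (rule Max_ge) auto

lemma bowen_dist_leI:
  "N \<ge> 1 \<Longrightarrow> (\<And>n. n < N \<Longrightarrow> dist ((T ^^ n) x) ((T ^^ n) y) \<le> r) \<Longrightarrow> bowen_dist T N x y \<le> r"
  unfolding bowen_dist_def by (subst Max_le_iff) (auto simp: lessThan_empty_iff)

lemma dist_le_bowen_dist: "N \<ge> 1 \<Longrightarrow> dist x y \<le> bowen_dist T N x y"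
  using dist_funpow_le_bowen_dist[of 0 N T x y] by simp

lemma bowen_dist_nonneg: "N \<ge> 1 \<Longrightarrow> 0 \<le> bowen_dist T N x y"
  using dist_le_bowen_dist[of N x y T] zero_le_dist[of x y] by linarith

lemma bowen_dist_self: "N \<ge> 1 \<Longrightarrow> bowen_dist T N x x = 0"
  using bowen_dist_leI[of N T x x 0] bowen_dist_nonneg[of N T x x] by simp

lemma bowen_dist_commute: "bowen_dist T N x y = bowen_dist T N y x"
  unfolding bowen_dist_def by (simp add: dist_commute)

lemma bowen_dist_triangle: "N \<ge> 1 \<Longrightarrow> bowen_dist T N x z \<le> bowen_dist T N x y + bowen_dist T N y z"
proof (rule bowen_dist_leI)
  fix n assume "n < N"
  have "dist ((T ^^ n) x) ((T ^^ n) z) \<le> dist ((T ^^ n) x) ((T ^^ n) y) + dist ((T ^^ n) y) ((T ^^ n) z)"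
    by (rule dist_triangle)
  also have "\<dots> \<le> bowen_dist T N x y + bowen_dist T N y z"
    using dist_funpow_le_bowen_dist[OF \<open>n < N\<close>] by (intro add_mono)
  finally show "dist ((T ^^ n) x) ((T ^^ n) z) \<le> bowen_dist T N x y + bowen_dist T N y z" .
qed

lemma bowen_dist_mono: "N \<ge> 1 \<Longrightarrow> N \<le> M \<Longrightarrow> bowen_dist T N x y \<le> bowen_dist T M x y"
  by (rule bowen_dist_leI) (auto intro: dist_funpow_le_bowen_dist)

lemma bowen_dist_funpow_le:
  "M \<ge> 1 \<Longrightarrow> bowen_dist T M ((T ^^ N) x) ((T ^^ N) y) \<le> bowen_dist T (N + M) x y"
proof (rule bowen_dist_leI)
  fix n assume "n < M"
  then show "dist ((T ^^ n) ((T ^^ N) x)) ((T ^^ n) ((T ^^ N) y)) \<le> bowen_dist T (N + M) x y"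
    using dist_funpow_le_bowen_dist[of "n + N" "N + M" T x y] by (simp add: funpow_add)
qed

lemma bowen_dist_add_le_max:
  assumes "N \<ge> 1"
  shows "bowen_dist T (N + M) x y \<le> max (bowen_dist T N x y) (bowen_dist T M ((T ^^ N) x) ((T ^^ N) y))"
proof (rule bowen_dist_leI)
  fix n assume "n < N + M"
  show "dist ((T ^^ n) x) ((T ^^ n) y) \<le> max (bowen_dist T N x y) (bowen_dist T M ((T ^^ N) x) ((T ^^ N) y))"
  proof (cases "n < N")
    case True
    then show ?thesis using dist_funpow_le_bowen_dist[of n N T x y] by linarith
  next
    case False
    then obtain k where k: "n = k + N" "k < M"
      using \<open>n < N + M\<close> by (metis add.commute le_add_diff_inverse less_diff_conv2 not_less)
    then show ?thesis
      using dist_funpow_le_bowen_dist[of k M T "(T ^^ N) x" "(T ^^ N) y"] by (simp add: funpow_add)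
  qed
qed (use assms in simp)

lemma bowen_ball_zero:
  assumes "N \<ge> 1"
  shows "bowen_ball S N y 0 = {y}"
proof -
  have "z = y" if "bowen_dist S N z y \<le> 0" for z
    using that dist_le_bowen_dist[OF assms, of z y S] by (meson dist_le_zero_iff order_trans)
  then show ?thesis unfolding bowen_ball_def using bowen_dist_self[OF assms, of S y] by auto
qed

lemma bowen_ball_mono: "r \<le> s \<Longrightarrow> bowen_ball S N y r \<subseteq> bowen_ball S N y s"
  unfolding bowen_ball_def by auto

lemma bowen_ball_add_subset:
  assumes "N \<ge> 1" "M \<ge> 1"
  shows "bowen_ball S (N + M) y r \<subseteq> bowen_ball S N y r \<inter> (S ^^ N) -` bowen_ball S M ((S ^^ N) y) r"
proof
  fix z assume "z \<in> bowen_ball S (N + M) y r"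
  then show "z \<in> bowen_ball S N y r \<inter> (S ^^ N) -` bowen_ball S M ((S ^^ N) y) r"
    using bowen_dist_mono[OF assms(1), of "N + M" S z y] bowen_dist_funpow_le[OF assms(2), of S N z y]
    unfolding bowen_ball_def by auto
qed

lemma diameter_bowen_ball_le:
  assumes "N \<ge> 1" "0 \<le> r"
  shows "diameter (bowen_ball S N y r) \<le> 2 * r"
proof -
  have near: "dist z y \<le> r" if "z \<in> bowen_ball S N y r" for z
    using that dist_le_bowen_dist[OF assms(1), of z y S] unfolding bowen_ball_def by auto
  have "dist a b \<le> 2 * r" if "a \<in> bowen_ball S N y r" "b \<in> bowen_ball S N y r" for a b
    using near[OF that(1)] near[OF that(2)] dist_triangle[of a b y] by (simp add: dist_commute)
  moreover have "y \<in> bowen_ball S N y r"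
    using bowen_ball_mono[OF assms(2)] bowen_ball_zero[OF assms(1)] by blast
  ultimately show ?thesis unfolding diameter_def by (auto intro!: cSUP_least)
qed

lemma bowen_diam_le:
  "0 \<le> r \<Longrightarrow> (\<And>x y. x \<in> U \<Longrightarrow> y \<in> U \<Longrightarrow> bowen_dist T N x y \<le> r) \<Longrightarrow> bowen_diam T N U \<le> r"
  unfolding bowen_diam_def by (auto intro!: cSUP_least)

section \<open>Fekete's lemma\<close>

lemma tendsto_INF_squeeze:
  fixes g :: "'b \<Rightarrow> real" and h :: "'c \<Rightarrow> real"
  assumes "A \<noteq> {}" "bdd_below (h ` A)"
    and lower: "\<forall>\<^sub>F x in F. (INF n\<in>A. h n) \<le> g x"
    and upper: "\<And>n y. n \<in> A \<Longrightarrow> h n < y \<Longrightarrow> \<forall>\<^sub>F x in F. g x < y"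
  shows "(g \<longlongrightarrow> (INF n\<in>A. h n)) F"
proof (rule order_tendstoI)
  fix y assume y: "y < (INF n\<in>A. h n)"
  from lower show "\<forall>\<^sub>F x in F. y < g x" by eventually_elim (use y in linarith)
next
  fix y assume "(INF n\<in>A. h n) < y"
  then obtain n where "n \<in> A" "h n < y" by (subst (asm) cINF_less_iff[OF assms(1,2)]) auto
  then show "\<forall>\<^sub>F x in F. g x < y" by (rule upper)
qed

lemma subadditive_quotient_le:
  fixes a :: "nat \<Rightarrow> real"
  assumes sub: "\<And>n m. n \<ge> 1 \<Longrightarrow> m \<ge> 1 \<Longrightarrow> a (n + m) \<le> a n + a m"
    and nonneg: "\<And>n. n \<ge> 1 \<Longrightarrow> a n \<ge> 0"
    and "L \<ge> 1" "n \<ge> 1"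
  shows "a n / real n \<le> a L / real L + Max (a ` {1..L}) / real n"
proof -
  define C where "C = Max (a ` {1..L})"
  have blocks: "a (q * L + r) \<le> real q * a L + C" if "r \<in> {1..L}" for q r
  proof (induction q)
    case 0
    then show ?case unfolding C_def using that by (auto intro: Max_ge)
  next
    case (Suc q)
    have "a (Suc q * L + r) = a (L + (q * L + r))" by (simp add: algebra_simps)
    also have "\<dots> \<le> a L + a (q * L + r)" using sub \<open>L \<ge> 1\<close> that by auto
    finally show ?case using Suc by (simp add: algebra_simps)
  qed
  define q where "q = (n - 1) div L"
  define r where "r = (n - 1) mod L + 1"
  have n: "n = q * L + r"
    unfolding q_def r_def using \<open>n \<ge> 1\<close> by (simp add: add.commute[of _ 1] add.assoc[symmetric])
  have "r \<in> {1..L}" unfolding r_def using \<open>L \<ge> 1\<close> by (auto simp: Suc_le_eq)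
  then have "a n \<le> real q * a L + C" using blocks n by simp
  also have "real q * a L \<le> real n / real L * a L"
    using n \<open>L \<ge> 1\<close> nonneg[OF \<open>L \<ge> 1\<close>]
    by (intro mult_right_mono) (simp_all add: field_simps flip: of_nat_mult)
  finally have "a n / real n \<le> (real n * (a L / real L) + C) / real n"
    using \<open>n \<ge> 1\<close> by (simp add: divide_right_mono)
  also have "\<dots> = a L / real L + C / real n" using \<open>n \<ge> 1\<close> by (simp add: field_simps)
  finally show ?thesis unfolding C_def .
qed

lemma fekete_subadditive:
  fixes a :: "nat \<Rightarrow> real"
  assumes sub: "\<And>n m. n \<ge> 1 \<Longrightarrow> m \<ge> 1 \<Longrightarrow> a (n + m) \<le> a n + a m"
    and nonneg: "\<And>n. n \<ge> 1 \<Longrightarrow> a n \<ge> 0"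
  shows "(\<lambda>n. a n / real n) \<longlonglongrightarrow> (INF n\<in>{1..}. a n / real n)"
proof -
  have bdd: "bdd_below ((\<lambda>n. a n / real n) ` {1..})"
    by (rule bdd_belowI[of _ 0]) (auto intro!: divide_nonneg_nonneg nonneg)
  show ?thesis
  proof (rule tendsto_INF_squeeze[OF _ bdd])
    show "\<forall>\<^sub>F n in sequentially. (INF n\<in>{1..}. a n / real n) \<le> a n / real n"
      using eventually_ge_at_top[of 1] by eventually_elim (intro cINF_lower[OF bdd], simp)
  next
    fix L y assume L: "L \<in> {1..}" "a L / real L < y"
    have "(\<lambda>n. a L / real L + Max (a ` {1..L}) / real n) \<longlonglongrightarrow> a L / real L + 0"
      by (intro tendsto_add tendsto_const tendsto_divide_0[OF tendsto_const]
          filterlim_at_top_imp_at_infinity filterlim_real_sequentially)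
    then have "\<forall>\<^sub>F n in sequentially. a L / real L + Max (a ` {1..L}) / real n < y"
      using L(2) by (intro order_tendstoD(2)) auto
    then show "\<forall>\<^sub>F n in sequentially. a n / real n < y"
      using eventually_ge_at_top[of 1]
      by eventually_elim (use subadditive_quotient_le[OF sub nonneg, of L] L(1) in fastforce)
  qed simp
qed

lemma lim_divide_mult_const:
  fixes a :: "nat \<Rightarrow> real"
  assumes "(\<lambda>n. a n / real n) \<longlonglongrightarrow> l"
  shows "lim (\<lambda>n. a n / (real n * c)) = l / c"
proof (cases "c = 0")
  case False
  then have "(\<lambda>n. a n / real n / c) \<longlonglongrightarrow> l / c" by (intro tendsto_divide assms tendsto_const)
  then show ?thesis by (simp add: divide_divide_eq_left limI)
qed simp

section \<open>Covering numbers\<close>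

definition bowen_cover :: "('a::metric_space \<Rightarrow> 'a) \<Rightarrow> nat \<Rightarrow> real \<Rightarrow> 'a set set \<Rightarrow> bool" where
  "bowen_cover T N \<epsilon> F \<longleftrightarrow> finite F \<and> (\<forall>U\<in>F. open U \<and> bowen_diam T N U < \<epsilon>)"

definition log_cover_sup :: "('a::metric_space \<Rightarrow> 'a) \<Rightarrow> nat \<Rightarrow> real \<Rightarrow> ('b \<Rightarrow> 'a set) \<Rightarrow> real" where
  "log_cover_sup T N \<epsilon> P = (SUP y. ln (real (cover_num T N \<epsilon> (P y))))"

definition ball_cover_growth :: "('a::metric_space \<Rightarrow> 'a) \<Rightarrow> ('b::metric_space \<Rightarrow> 'b) \<Rightarrow> ('a \<Rightarrow> 'b)
    \<Rightarrow> real \<Rightarrow> real \<Rightarrow> real" where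
  "ball_cover_growth T S \<pi> \<epsilon> \<delta> = (INF N\<in>{1..}. log_cover_sup T N \<epsilon> (\<lambda>y. \<pi> -` bowen_ball S N y \<delta>) / real N)"

lemma cover_num_le_card: "bowen_cover T N \<epsilon> F \<Longrightarrow> E \<subseteq> \<Union>F \<Longrightarrow> cover_num T N \<epsilon> E \<le> card F"
  unfolding cover_num_def bowen_cover_def by (rule Least_le) blast

lemma ln_of_nat_nonneg: "0 \<le> ln (real n)"
  by (cases "n = 0") auto

lemma ln_of_nat_mono: "m \<le> n \<Longrightarrow> ln (real m) \<le> ln (real n)"
  by (cases "m = 0") (auto simp: ln_of_nat_nonneg)

locale compact_dynamics =
  fixes T :: "'a::metric_space \<Rightarrow> 'a"
  assumes compact_UNIV: "compact (UNIV :: 'a set)"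
    and continuous_T: "continuous_on UNIV T"
begin

lemma bowen_dist_bounded:
  obtains B where "\<And>N x y. N \<ge> 1 \<Longrightarrow> bowen_dist T N x y \<le> B"
proof -
  obtain z e where e: "\<And>x::'a. dist z x \<le> e"
    using compact_imp_bounded[OF compact_UNIV] unfolding bounded_def by auto
  have "dist x y \<le> 2 * e" for x y :: 'a
    using dist_triangle[of x y z] e[of x] e[of y] by (simp add: dist_commute)
  then show ?thesis by (intro that[of "2 * e"] bowen_dist_leI) auto
qed

lemma bowen_dist_le_bowen_diam:
  assumes "N \<ge> 1" "x \<in> U" "y \<in> U"
  shows "bowen_dist T N x y \<le> bowen_diam T N U"
proof -
  obtain B where "\<And>N x y. N \<ge> 1 \<Longrightarrow> bowen_dist T N x y \<le> B" using bowen_dist_bounded by blast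
  then have "bdd_above ((\<lambda>p. bowen_dist T N (fst p) (snd p)) ` (U \<times> U))"
    using assms(1) by (intro bdd_aboveI[of _ B]) auto
  then show ?thesis unfolding bowen_diam_def using assms(2,3)
    by (auto intro!: cSUP_upper2[of _ _ "(x, y)"])
qed

lemma bowen_diam_nonneg:
  assumes "N \<ge> 1"
  shows "0 \<le> bowen_diam T N U"
proof (cases "U = {}")
  case False
  then obtain x where "x \<in> U" by auto
  then show ?thesis
    using bowen_dist_le_bowen_diam[OF assms \<open>x \<in> U\<close> \<open>x \<in> U\<close>] bowen_dist_self[OF assms, of T x] by simp
qed (simp add: bowen_diam_def)

lemma open_bowen_dist_less: "N \<ge> 1 \<Longrightarrow> open {z. bowen_dist T N x z < r}"
proof -
  assume "N \<ge> 1"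
  then have "{z. bowen_dist T N x z < r} = (\<Inter>n<N. (T ^^ n) -` ball ((T ^^ n) x) r)"
    unfolding bowen_dist_def by (subst Max_less_iff) (auto simp: lessThan_empty_iff)
  also have "open \<dots>"
    by (intro open_INT finite_lessThan ballI open_vimage open_ball continuous_on_funpow continuous_T)
  finally show ?thesis .
qed

lemma bowen_cover_UNIV:
  assumes "N \<ge> 1" "\<epsilon> > 0"
  obtains F where "bowen_cover T N \<epsilon> F" "UNIV \<subseteq> \<Union>F"
proof -
  define C where "C = range (\<lambda>x. {z. bowen_dist T N x z < \<epsilon> / 3})"
  have "x \<in> {z. bowen_dist T N x z < \<epsilon> / 3}" for x using bowen_dist_self[OF assms(1), of T x] assms(2) by simp
  then have "UNIV \<subseteq> \<Union>C" unfolding C_def by blast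
  moreover have open_C: "\<And>U. U \<in> C \<Longrightarrow> open U" unfolding C_def using open_bowen_dist_less[OF assms(1)] by blast
  ultimately obtain F where F: "F \<subseteq> C" "finite F" "UNIV \<subseteq> \<Union>F" using compactE[OF compact_UNIV] by metis
  have "bowen_diam T N U < \<epsilon>" if "U \<in> C" for U
  proof -
    obtain x where U: "U = {z. bowen_dist T N x z < \<epsilon> / 3}" using \<open>U \<in> C\<close> unfolding C_def by auto
    have "bowen_diam T N U \<le> 2 * \<epsilon> / 3"
    proof (rule bowen_diam_le)
      fix y z assume "y \<in> U" "z \<in> U"
      then have "bowen_dist T N y x < \<epsilon> / 3" "bowen_dist T N x z < \<epsilon> / 3"
        using U bowen_dist_commute[of T N x y] by auto
      then show "bowen_dist T N y z \<le> 2 * \<epsilon> / 3"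
        using bowen_dist_triangle[OF assms(1), of T y z x] by linarith
    qed (use assms(2) in auto)
    then show ?thesis using assms(2) by linarith
  qed
  with F open_C show ?thesis by (intro that[of F]) (auto simp: bowen_cover_def)
qed

lemma cover_num_attained:
  assumes "N \<ge> 1" "\<epsilon> > 0"
  obtains F where "bowen_cover T N \<epsilon> F" "card F = cover_num T N \<epsilon> E" "E \<subseteq> \<Union>F"
proof -
  obtain F where "bowen_cover T N \<epsilon> F" "UNIV \<subseteq> \<Union>F" using bowen_cover_UNIV[OF assms] .
  then have "\<exists>k F. finite F \<and> card F = k \<and> (\<forall>U\<in>F. open U \<and> bowen_diam T N U < \<epsilon>) \<and> E \<subseteq> \<Union>F"
    unfolding bowen_cover_def by blast
  then have "\<exists>F. finite F \<and> card F = cover_num T N \<epsilon> E \<and> (\<forall>U\<in>F. open U \<and> bowen_diam T N U < \<epsilon>) \<and> E \<subseteq> \<Union>F"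
    unfolding cover_num_def by (rule LeastI_ex)
  then show ?thesis using that unfolding bowen_cover_def by blast
qed

lemma cover_num_mono:
  assumes "N \<ge> 1" "\<epsilon> > 0" "E \<subseteq> E'"
  shows "cover_num T N \<epsilon> E \<le> cover_num T N \<epsilon> E'"
proof -
  obtain F where "bowen_cover T N \<epsilon> F" "card F = cover_num T N \<epsilon> E'" "E' \<subseteq> \<Union>F"
    using cover_num_attained[OF assms(1,2)] .
  then show ?thesis using cover_num_le_card[of T N \<epsilon> F E] assms(3) by auto
qed

lemma bowen_cover_join:
  assumes "N \<ge> 1" "M \<ge> 1" "bowen_cover T N \<epsilon> F" "bowen_cover T M \<epsilon> G"
  shows "bowen_cover T (N + M) \<epsilon> ((\<lambda>(U, V). U \<inter> (T ^^ N) -` V) ` (F \<times> G))"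
  unfolding bowen_cover_def
proof (intro conjI ballI)
  show "finite ((\<lambda>(U, V). U \<inter> (T ^^ N) -` V) ` (F \<times> G))"
    using assms(3,4) by (auto simp: bowen_cover_def)
next
  fix W assume "W \<in> (\<lambda>(U, V). U \<inter> (T ^^ N) -` V) ` (F \<times> G)"
  then obtain U V where UV: "U \<in> F" "V \<in> G" "W = U \<inter> (T ^^ N) -` V" by auto
  then show "open W" using assms(3,4)
    by (auto simp: bowen_cover_def intro!: open_Int open_vimage continuous_on_funpow continuous_T)
  have "bowen_diam T (N + M) W \<le> max (bowen_diam T N U) (bowen_diam T M V)"
  proof (rule bowen_diam_le)
    fix x y assume "x \<in> W" "y \<in> W"
    then have "bowen_dist T N x y \<le> bowen_diam T N U"
        "bowen_dist T M ((T ^^ N) x) ((T ^^ N) y) \<le> bowen_diam T M V"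
      using UV assms(1,2) by (auto intro: bowen_dist_le_bowen_diam)
    then show "bowen_dist T (N + M) x y \<le> max (bowen_diam T N U) (bowen_diam T M V)"
      using bowen_dist_add_le_max[OF assms(1), of T M x y] by linarith
  qed (use bowen_diam_nonneg[OF assms(1)] in \<open>simp add: le_max_iff_disj\<close>)
  moreover have "bowen_diam T N U < \<epsilon>" "bowen_diam T M V < \<epsilon>"
    using UV assms(3,4) by (auto simp: bowen_cover_def)
  ultimately show "bowen_diam T (N + M) W < \<epsilon>" by simp
qed

lemma cover_num_add_le_mult:
  assumes "N \<ge> 1" "M \<ge> 1" "\<epsilon> > 0" and E: "E \<subseteq> E1 \<inter> (T ^^ N) -` E2"
  shows "cover_num T (N + M) \<epsilon> E \<le> cover_num T N \<epsilon> E1 * cover_num T M \<epsilon> E2"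
proof -
  obtain F where F: "bowen_cover T N \<epsilon> F" "card F = cover_num T N \<epsilon> E1" "E1 \<subseteq> \<Union>F"
    using cover_num_attained[OF assms(1,3)] .
  obtain G where G: "bowen_cover T M \<epsilon> G" "card G = cover_num T M \<epsilon> E2" "E2 \<subseteq> \<Union>G"
    using cover_num_attained[OF assms(2,3)] .
  define H where "H = (\<lambda>(U, V). U \<inter> (T ^^ N) -` V) ` (F \<times> G)"
  have H: "bowen_cover T (N + M) \<epsilon> H" unfolding H_def by (rule bowen_cover_join[OF assms(1,2) F(1) G(1)])
  have "E \<subseteq> \<Union>H"
  proof
    fix x assume "x \<in> E"
    then obtain U V where "U \<in> F" "V \<in> G" "x \<in> U" "(T ^^ N) x \<in> V" using E F(3) G(3) by blast
    then show "x \<in> \<Union>H" unfolding H_def by blast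
  qed
  then have "cover_num T (N + M) \<epsilon> E \<le> card H" by (rule cover_num_le_card[OF H])
  also have "\<dots> \<le> card (F \<times> G)"
    unfolding H_def using F(1) G(1) by (intro card_image_le) (auto simp: bowen_cover_def)
  also have "\<dots> = cover_num T N \<epsilon> E1 * cover_num T M \<epsilon> E2" by (simp add: F(2) G(2) card_cartesian_product)
  finally show ?thesis .
qed

lemma bdd_above_log_cover_num:
  assumes "N \<ge> 1" "\<epsilon> > 0"
  shows "bdd_above (range (\<lambda>y. ln (real (cover_num T N \<epsilon> (P y)))))"
  by (rule bdd_aboveI[of _ "ln (real (cover_num T N \<epsilon> UNIV))"])
     (auto intro!: ln_of_nat_mono cover_num_mono[OF assms])

lemma log_cover_sup_nonneg:
  assumes "N \<ge> 1" "\<epsilon> > 0"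
  shows "0 \<le> log_cover_sup T N \<epsilon> P"
  unfolding log_cover_sup_def
  by (rule cSUP_upper2[OF bdd_above_log_cover_num[OF assms], of undefined]) (auto simp: ln_of_nat_nonneg)

lemma log_cover_sup_le:
  assumes "N \<ge> 1" "\<epsilon> > 0" and le: "\<And>y. \<exists>z. cover_num T N \<epsilon> (P y) \<le> cover_num T N \<epsilon> (Q z)"
  shows "log_cover_sup T N \<epsilon> P \<le> log_cover_sup T N \<epsilon> Q"
  unfolding log_cover_sup_def
proof (rule cSUP_mono)
  show "bdd_above (range (\<lambda>y. ln (real (cover_num T N \<epsilon> (Q y)))))"
    by (rule bdd_above_log_cover_num[OF assms(1,2)])
  fix y
  show "\<exists>z\<in>UNIV. ln (real (cover_num T N \<epsilon> (P y))) \<le> ln (real (cover_num T N \<epsilon> (Q z)))"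
  proof -
    obtain z where "cover_num T N \<epsilon> (P y) \<le> cover_num T N \<epsilon> (Q z)" using le by blast
    then show ?thesis by (intro bexI[of _ z] ln_of_nat_mono) auto
  qed
qed simp

lemma log_cover_sup_add_le:
  assumes "N \<ge> 1" "M \<ge> 1" "\<epsilon> > 0"
    and incl: "\<And>y. P (N + M) y \<subseteq> P N y \<inter> (T ^^ N) -` P M (g y)"
  shows "log_cover_sup T (N + M) \<epsilon> (P (N + M)) \<le> log_cover_sup T N \<epsilon> (P N) + log_cover_sup T M \<epsilon> (P M)"
  unfolding log_cover_sup_def
proof (rule cSUP_least)
  fix y
  define c c1 c2 where "c = cover_num T (N + M) \<epsilon> (P (N + M) y)"
    and "c1 = cover_num T N \<epsilon> (P N y)" and "c2 = cover_num T M \<epsilon> (P M (g y))"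
  have c: "c \<le> c1 * c2" unfolding c_def c1_def c2_def by (rule cover_num_add_le_mult[OF assms(1-3) incl])
  have "ln (real c) \<le> ln (real c1) + ln (real c2)"
  proof (cases "c = 0")
    case False
    then have "c1 > 0" "c2 > 0" using c by (metis le_0_eq mult_0 mult_0_right neq0_conv)+
    then show ?thesis using c ln_of_nat_mono[OF c] by (simp add: ln_mult)
  qed (simp add: ln_of_nat_nonneg)
  also have "\<dots> \<le> (SUP y. ln (real (cover_num T N \<epsilon> (P N y)))) + (SUP y. ln (real (cover_num T M \<epsilon> (P M y))))"
    unfolding c1_def c2_def using assms by (intro add_mono cSUP_upper bdd_above_log_cover_num) auto
  finally show "ln (real (cover_num T (N + M) \<epsilon> (P (N + M) y)))
      \<le> (SUP y. ln (real (cover_num T N \<epsilon> (P N y)))) + (SUP y. ln (real (cover_num T M \<epsilon> (P M y))))"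
    unfolding c_def .
qed simp

section \<open>Bowen balls versus fibers\<close>

lemma log_cover_sup_ball_add_le:
  fixes S :: "'b::metric_space \<Rightarrow> 'b" and \<pi> :: "'a \<Rightarrow> 'b"
  assumes "\<pi> \<circ> T = S \<circ> \<pi>" "N \<ge> 1" "M \<ge> 1" "\<epsilon> > 0"
  shows "log_cover_sup T (N + M) \<epsilon> (\<lambda>y. \<pi> -` bowen_ball S (N + M) y \<delta>)
    \<le> log_cover_sup T N \<epsilon> (\<lambda>y. \<pi> -` bowen_ball S N y \<delta>) + log_cover_sup T M \<epsilon> (\<lambda>y. \<pi> -` bowen_ball S M y \<delta>)"
proof (rule log_cover_sup_add_le[OF assms(2-4), where P = "\<lambda>K y. \<pi> -` bowen_ball S K y \<delta>" and g = "S ^^ N"])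
  fix y
  show "\<pi> -` bowen_ball S (N + M) y \<delta> \<subseteq> \<pi> -` bowen_ball S N y \<delta> \<inter> (T ^^ N) -` \<pi> -` bowen_ball S M ((S ^^ N) y) \<delta>"
    using bowen_ball_add_subset[OF assms(2,3), of S y \<delta>] by (auto simp: funpow_equivariant[OF assms(1)])
qed

lemma log_cover_sup_ball_le_fiber:
  fixes S :: "'b::metric_space \<Rightarrow> 'b" and \<pi> :: "'a \<Rightarrow> 'b"
  assumes "compact (UNIV :: 'b set)" "continuous_on UNIV \<pi>" "N \<ge> 1" "\<epsilon> > 0"
  shows "\<forall>\<^sub>F \<delta> in at_right 0.
    log_cover_sup T N \<epsilon> (\<lambda>y. \<pi> -` bowen_ball S N y \<delta>) \<le> log_cover_sup T N \<epsilon> (\<lambda>y. \<pi> -` {y})"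
proof -
  have "\<forall>y. \<exists>F. bowen_cover T N \<epsilon> F \<and> card F = cover_num T N \<epsilon> (\<pi> -` {y}) \<and> \<pi> -` {y} \<subseteq> \<Union>F"
    by (intro allI, rule cover_num_attained[OF assms(3,4)]) blast
  then obtain F where F: "\<And>y. bowen_cover T N \<epsilon> (F y)" "\<And>y. card (F y) = cover_num T N \<epsilon> (\<pi> -` {y})"
      "\<And>y. \<pi> -` {y} \<subseteq> \<Union>(F y)"
    by metis
  have open_F: "open (\<Union>(F y))" for y using F(1)[of y] by (auto simp: bowen_cover_def)
  show ?thesis
  proof (rule uniform_fiber_neighborhoods[OF compact_UNIV assms(1,2) open_F F(3)])
    fix d :: real assume d: "d > 0" "\<And>B. diameter B < d \<Longrightarrow> \<exists>y. \<pi> -` B \<subseteq> \<Union>(F y)"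
    have "log_cover_sup T N \<epsilon> (\<lambda>y. \<pi> -` bowen_ball S N y \<delta>) \<le> log_cover_sup T N \<epsilon> (\<lambda>y. \<pi> -` {y})"
      if \<delta>: "0 < \<delta>" "\<delta> < d / 2" for \<delta>
    proof (rule log_cover_sup_le[OF assms(3,4)])
      fix y'
      have "diameter (bowen_ball S N y' \<delta>) \<le> 2 * \<delta>"
        using \<delta> by (intro diameter_bowen_ball_le assms(3)) simp
      then have "diameter (bowen_ball S N y' \<delta>) < d" using \<delta> by linarith
      from d(2)[OF this] obtain y where "\<pi> -` bowen_ball S N y' \<delta> \<subseteq> \<Union>(F y)" ..
      then have "cover_num T N \<epsilon> (\<pi> -` bowen_ball S N y' \<delta>) \<le> card (F y)"
        by (rule cover_num_le_card[OF F(1)])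
      then show "\<exists>y. cover_num T N \<epsilon> (\<pi> -` bowen_ball S N y' \<delta>) \<le> cover_num T N \<epsilon> (\<pi> -` {y})"
        unfolding F(2) ..
    qed
    then show ?thesis unfolding eventually_at_right_field using d(1) by (intro exI[of _ "d / 2"]) auto
  qed
qed

lemma log_cover_sup_ball_quotient_tendsto:
  fixes S :: "'b::metric_space \<Rightarrow> 'b" and \<pi> :: "'a \<Rightarrow> 'b"
  assumes "\<pi> \<circ> T = S \<circ> \<pi>" "\<epsilon> > 0"
  shows "(\<lambda>N. log_cover_sup T N \<epsilon> (\<lambda>y. \<pi> -` bowen_ball S N y \<delta>) / real N) \<longlonglongrightarrow> ball_cover_growth T S \<pi> \<epsilon> \<delta>"
  unfolding ball_cover_growth_def
proof (rule fekete_subadditive)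
  fix N M :: nat assume "N \<ge> 1" "M \<ge> 1"
  then show "log_cover_sup T (N + M) \<epsilon> (\<lambda>y. \<pi> -` bowen_ball S (N + M) y \<delta>)
    \<le> log_cover_sup T N \<epsilon> (\<lambda>y. \<pi> -` bowen_ball S N y \<delta>) + log_cover_sup T M \<epsilon> (\<lambda>y. \<pi> -` bowen_ball S M y \<delta>)"
    by (rule log_cover_sup_ball_add_le[OF assms(1) _ _ assms(2)])
next
  fix N :: nat assume "N \<ge> 1"
  then show "0 \<le> log_cover_sup T N \<epsilon> (\<lambda>y. \<pi> -` bowen_ball S N y \<delta>)"
    by (rule log_cover_sup_nonneg[OF _ assms(2)])
qed

lemma ball_cover_growth_mono:
  assumes "\<epsilon> > 0" "0 \<le> \<delta>"
  shows "ball_cover_growth T S \<pi> \<epsilon> 0 \<le> ball_cover_growth T S \<pi> \<epsilon> \<delta>"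
  unfolding ball_cover_growth_def
proof (rule cINF_mono)
  show "bdd_below ((\<lambda>N. log_cover_sup T N \<epsilon> (\<lambda>y. \<pi> -` bowen_ball S N y 0) / real N) ` {1..})"
    by (intro bdd_belowI[of _ 0]) (auto intro!: divide_nonneg_nonneg log_cover_sup_nonneg assms(1))
  fix N :: nat assume N: "N \<in> {1..}"
  have "log_cover_sup T N \<epsilon> (\<lambda>y. \<pi> -` bowen_ball S N y 0) \<le> log_cover_sup T N \<epsilon> (\<lambda>y. \<pi> -` bowen_ball S N y \<delta>)"
  proof (rule log_cover_sup_le)
    fix y
    have "\<pi> -` bowen_ball S N y 0 \<subseteq> \<pi> -` bowen_ball S N y \<delta>"
      using bowen_ball_mono[OF assms(2)] by blast
    then show "\<exists>z. cover_num T N \<epsilon> (\<pi> -` bowen_ball S N y 0) \<le> cover_num T N \<epsilon> (\<pi> -` bowen_ball S N z \<delta>)"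
      using N assms(1) by (intro exI[of _ y] cover_num_mono) auto
  qed (use N assms(1) in auto)
  with N show "\<exists>M\<in>{1..}. log_cover_sup T M \<epsilon> (\<lambda>y. \<pi> -` bowen_ball S M y 0) / real M
      \<le> log_cover_sup T N \<epsilon> (\<lambda>y. \<pi> -` bowen_ball S N y \<delta>) / real N"
    by (intro bexI[of _ N] divide_right_mono) auto
qed simp

lemma ball_cover_growth_tendsto_zero:
  fixes S :: "'b::metric_space \<Rightarrow> 'b" and \<pi> :: "'a \<Rightarrow> 'b"
  assumes "compact (UNIV :: 'b set)" "continuous_on UNIV \<pi>" "\<epsilon> > 0"
  shows "(ball_cover_growth T S \<pi> \<epsilon> \<longlongrightarrow> ball_cover_growth T S \<pi> \<epsilon> 0) (at_right 0)"
proof -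
  define b where "b \<delta> N = log_cover_sup T N \<epsilon> (\<lambda>y. \<pi> -` bowen_ball S N y \<delta>)" for \<delta> N
  have b_nonneg: "0 \<le> b \<delta> N" if "N \<ge> 1" for \<delta> N
    unfolding b_def using log_cover_sup_nonneg[OF that assms(3)] .
  have bdd: "bdd_below ((\<lambda>N. b \<delta> N / real N) ` {1..})" for \<delta>
    by (rule bdd_belowI[of _ 0]) (auto simp: b_nonneg)
  have growth: "ball_cover_growth T S \<pi> \<epsilon> \<delta> = (INF N\<in>{1..}. b \<delta> N / real N)" for \<delta>
    unfolding ball_cover_growth_def b_def ..
  show ?thesis
    unfolding growth[of 0]
  proof (rule tendsto_INF_squeeze[OF _ bdd])
    have "(INF N\<in>{1..}. b 0 N / real N) \<le> ball_cover_growth T S \<pi> \<epsilon> \<delta>" if "\<delta> > 0" for \<delta>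
      using ball_cover_growth_mono[OF assms(3), of \<delta> S \<pi>] that unfolding growth[of 0] by simp
    then show "\<forall>\<^sub>F \<delta> in at_right 0. (INF N\<in>{1..}. b 0 N / real N) \<le> ball_cover_growth T S \<pi> \<epsilon> \<delta>"
      using eventually_at_right_less[of "0::real"] by (auto elim: eventually_mono)
  next
    fix N y assume N: "N \<in> {1..}" and less: "b 0 N / real N < y"
    have "ball_cover_growth T S \<pi> \<epsilon> \<delta> < y" if "b \<delta> N \<le> b 0 N" for \<delta>
    proof -
      have "ball_cover_growth T S \<pi> \<epsilon> \<delta> \<le> b \<delta> N / real N"
        unfolding growth using N by (intro cINF_lower bdd)
      also have "\<dots> \<le> b 0 N / real N" using that by (simp add: divide_right_mono)
      finally show ?thesis using less by linarith
    qed
    moreover have "\<forall>\<^sub>F \<delta> in at_right 0. b \<delta> N \<le> b 0 N"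
      using log_cover_sup_ball_le_fiber[OF assms(1,2) _ assms(3), of N S] N
      by (simp add: b_def bowen_ball_zero)
    ultimately show "\<forall>\<^sub>F \<delta> in at_right 0. ball_cover_growth T S \<pi> \<epsilon> \<delta> < y"
      by (auto elim: eventually_mono)
  qed simp
qed

lemma fiber_rate_eq_ball_rate:
  fixes S :: "'b::metric_space \<Rightarrow> 'b" and \<pi> :: "'a \<Rightarrow> 'b"
  assumes "compact (UNIV :: 'b set)" "continuous_on UNIV \<pi>" "\<pi> \<circ> T = S \<circ> \<pi>" "\<epsilon> > 0"
  shows "fiber_rate T \<pi> \<epsilon> = ball_rate T S \<pi> \<epsilon>"
proof -
  let ?c = "ln (1 / \<epsilon>)" and ?I = "ball_cover_growth T S \<pi> \<epsilon>"
  have "\<forall>\<^sub>F N in sequentially. log_cover_sup T N \<epsilon> (\<lambda>y. \<pi> -` bowen_ball S N y 0) / real N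
      = log_cover_sup T N \<epsilon> (\<lambda>y. \<pi> -` {y}) / real N"
    using eventually_ge_at_top[of 1] by eventually_elim (simp add: bowen_ball_zero)
  with log_cover_sup_ball_quotient_tendsto[OF assms(3,4), of 0]
  have "(\<lambda>N. log_cover_sup T N \<epsilon> (\<lambda>y. \<pi> -` {y}) / real N) \<longlonglongrightarrow> ?I 0"
    by (simp add: tendsto_cong)
  then have "fiber_rate T \<pi> \<epsilon> = ?I 0 / ?c"
    unfolding fiber_rate_def log_cover_sup_def[symmetric] by (rule lim_divide_mult_const)
  moreover have "((\<lambda>\<delta>. ?I \<delta> / ?c) \<longlongrightarrow> ?I 0 / ?c) (at_right 0)"
    using tendsto_mult_right[OF ball_cover_growth_tendsto_zero[OF assms(1,2,4)], where c = "inverse ?c"]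
    by (simp add: divide_inverse)
  then have "ball_rate T S \<pi> \<epsilon> = ?I 0 / ?c"
    unfolding ball_rate_def log_cover_sup_def[symmetric]
      lim_divide_mult_const[OF log_cover_sup_ball_quotient_tendsto[OF assms(3,4)]]
    by (intro tendsto_Lim) auto
  ultimately show ?thesis by simp
qed

end

theorem lemma3p2:
  fixes T :: "'a::metric_space \<Rightarrow> 'a" and S :: "'b::metric_space \<Rightarrow> 'b" and \<pi> :: "'a \<Rightarrow> 'b"
  assumes "dyn_sys T" and "dyn_sys S"
    and "continuous_on UNIV \<pi>" and "\<pi> \<circ> T = S \<circ> \<pi>"
  shows "upper_cond_mdim T \<pi> = Limsup (at_right 0) (\<lambda>\<epsilon>. ereal (ball_rate T S \<pi> \<epsilon>))
       \<and> lower_cond_mdim T \<pi> = Liminf (at_right 0) (\<lambda>\<epsilon>. ereal (ball_rate T S \<pi> \<epsilon>))"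
proof -
  have "compact (UNIV :: 'a set)" "continuous_on UNIV T"
    using assms(1) unfolding dyn_sys_def homeomorphism_def by auto
  then interpret compact_dynamics T by (rule compact_dynamics.intro)
  have Y: "compact (UNIV :: 'b set)" using assms(2) by (simp add: dyn_sys_def)
  have "\<forall>\<^sub>F \<epsilon> in at_right 0. ereal (fiber_rate T \<pi> \<epsilon>) = ereal (ball_rate T S \<pi> \<epsilon>)"
    using eventually_at_right_less[of "0::real"]
    by eventually_elim (simp add: fiber_rate_eq_ball_rate[OF Y assms(3,4)])
  then show ?thesis
    unfolding upper_cond_mdim_def lower_cond_mdim_def by (simp add: Limsup_eq Liminf_eq)
qed

end
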